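(* Let the unit circle $\partial\mathbb{B}^2=\{w\in\mathbb{C}:|w|=1\}$ be a reflecting mirror, and suppose light rays arrive from the right side (from a source at $+\infty$ on the real axis), travelling parallel to the real axis. Let $f=re^{i\theta}$ be the observation point, where $r>1$ and $0\le\theta\le\frac{\pi}{2}$. If a light ray of this kind is reflected at a point $w$ of the unit circle (obeying the law of reflection: angle of incidence equals angle of reflection with respect to the normal line through $0$ and $w$) and then reaches $f$, then $w$ is a solution of the equation $$ re^{-i\theta}w^4-w^3+w-re^{i\theta}=0. $$
   Context: The incoming ray at the reflection point $w$ lies on the horizontal line through $w$, coming from the direction of the point $w+1$; the law of reflection means that the oriented angle from the ray direction $w+1-w$ to the normal direction $0-w$ equals the oriented angle from $0-w$ to $f-w$. *)

theory Defs
  imports "HOL-Analysis.Analysis"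
begin

definition oriented_angle :: "complex \<Rightarrow> complex \<Rightarrow> real" where
  "oriented_angle a b = Arg (b / a)"

end

theory Submission
  imports Defs
begin

text \<open>The incoming direction is \<open>1\<close>, so the angle from it to the normal \<open>-w\<close> is
  \<open>Arg (-w)\<close>; by the law of reflection the reflected ray is the normal rotated
  once more by that angle, i.e. it leaves \<open>w\<close> in the direction \<open>(-w)\<^sup>2 = w\<^sup>2\<close>;
  hence \<open>f = w + t w\<^sup>2\<close> with \<open>t > 0\<close>. Conjugating and using \<open>cnj w = 1 / w\<close> on the
  unit circle eliminates \<open>t\<close> and gives the quartic.\<close>

lemma reflection_law_imp_ray_direction:
  fixes w f :: complex
  assumes "w \<noteq> 0" "f \<noteq> w"
    and "oriented_angle 1 (- w) = oriented_angle (- w) (f - w)"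
  shows "\<exists>t>0. f = w + of_real t * w\<^sup>2"
proof -
  have "Arg (- w) = Arg ((f - w) / (- w))"
    using assms(3) by (simp add: oriented_angle_def)
  then obtain t where "t > 0" "- w = of_real t * ((f - w) / (- w))"
    using assms(1,2) by (auto simp: Arg_eq_iff)
  then have "f = w + of_real (1 / t) * w\<^sup>2"
    using assms(1) by (simp add: field_simps power2_eq_square)
  then show ?thesis
    using \<open>t > 0\<close> by (intro exI[of _ "1 / t"]) simp
qed

lemma unit_circle_ray_quartic:
  fixes w f :: complex and t :: real
  assumes "cmod w = 1" and "f = w + of_real t * w\<^sup>2"
  shows "cnj f * w ^ 4 - w ^ 3 + w - f = 0"
proof -
  have unit: "cnj w * w = 1"
    using assms(1) by (metis complex_mult_cnj complex_norm_square mult.commute of_real_1 power_one)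
  have "cnj f = cnj w + of_real t * (cnj w)\<^sup>2"
    using assms(2) by simp
  then have "cnj f * w ^ 4 = (cnj w * w) * w ^ 3 + of_real t * (cnj w * w)\<^sup>2 * w\<^sup>2"
    by algebra
  also have "\<dots> = f - w + w ^ 3"
    using unit assms(2) by simp
  finally show ?thesis
    by simp
qed

theorem theorem3p1:
  fixes r \<theta> :: real and w f :: complex
  assumes r: "r > 1"
    and \<theta>: "0 \<le> \<theta>" "\<theta> \<le> pi / 2"
    and f: "f = of_real r * exp (\<i> * of_real \<theta>)"
    and w: "cmod w = 1"
    and refl: "oriented_angle ((w + 1) - w) (0 - w) = oriented_angle (0 - w) (f - w)"
  shows "of_real r * exp (- \<i> * of_real \<theta>) * w ^ 4 - w ^ 3 + w
           - of_real r * exp (\<i> * of_real \<theta>) = 0"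
proof -
  have "cmod f = r"
    using f r by (simp add: norm_mult)
  then have "f \<noteq> w"
    using r w by auto
  moreover have "w \<noteq> 0"
    using w by auto
  ultimately obtain t where "f = w + of_real t * w\<^sup>2"
    using reflection_law_imp_ray_direction refl by auto
  then have "cnj f * w ^ 4 - w ^ 3 + w - f = 0"
    using unit_circle_ray_quartic w by blast
  moreover have "of_real r * exp (- \<i> * of_real \<theta>) = cnj f"
    using f by (simp add: exp_cnj)
  ultimately show ?thesis
    by (simp only: f[symmetric])
qed

end
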